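(* In the search model described in the context, if $pv>c(0)$, then it is optimal for the agent to engage in search, i.e., no strategy with $L_t=\emptyset$ for all $t$ is optimal (some strategy searching a set of positive measure yields strictly higher payoff than never searching).
   Context: A single agent searches for an innovation among research projects $J=[0,1)$. In each period $t=1,2,\ldots$ the agent may examine an arbitrary Lebesgue-measurable set $S\subseteq J$ at cost $C(S)=\int_S c(j)\,dj$, where $c:[0,1)\to\mathbb{R}$ is continuous, strictly increasing, and satisfies $\lim_{j\to 1}c(j)=\infty$. With probability $p\in(0,1)$ the innovation is feasible, in which case there is a single successful project $\hat j\in J$, distributed uniformly on $J$; examining $\hat j$ yields a success of value $v>0$, examining any other project yields nothing. With probability $1-p$ no project is successful. Payoffs and costs are discounted by $\delta\in(0,1)$ per period. A search strategy is a sequence $\sigma=(L_1,L_2,\ldots)$ of (possibly empty) measurable subsets of $[0,1)$, where $L_t$ is the set examined in period $t$ if no success occurred in periods $1,\ldots,t-1$; search ends once a success occurs. Let $S_t=\bigcup_{t'<t}L_{t'}$. The agent's payoff from $\sigma$ is $\mathbb{E}\big[\sum_{t\ge1}\delta^{t-1}\big(v\cdot\mathbf{1}\{\text{success in period } t\}-C(L_t)\cdot\mathbf{1}\{\text{no success before period } t\}\big)\big]$, where success in period $t$ means $\hat j$ exists, $\hat j\in L_t$ and $\hat j\notin S_t$. Never searching yields payoff zero. *)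

theory Defs
  imports "HOL-Analysis.Analysis"
begin

text \<open>Periods are indexed from 0: L t is the set examined in period t+1,
  discounted by delta^t. Projects live in [0,1); the (random) successful project is
  a value of type real option: None = innovation infeasible, Some j = project j succeeds.\<close>

definition cost :: "(real \<Rightarrow> real) \<Rightarrow> real set \<Rightarrow> real" where
  "cost c S = (LINT j:S|lebesgue. c j)"

definition searched_before :: "(nat \<Rightarrow> real set) \<Rightarrow> nat \<Rightarrow> real set" where
  "searched_before L t = (\<Union>t'<t. L t')"

definition admissible :: "(nat \<Rightarrow> real set) \<Rightarrow> bool" where
  "admissible L \<longleftrightarrow> (\<forall>t. L t \<in> sets lebesgue \<and> L t \<subseteq> {0..<1})"

definition success_at :: "(nat \<Rightarrow> real set) \<Rightarrow> real option \<Rightarrow> nat \<Rightarrow> bool" where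
  "success_at L x t = (case x of None \<Rightarrow> False
       | Some j \<Rightarrow> j \<in> L t \<and> j \<notin> searched_before L t)"

definition no_success_before :: "(nat \<Rightarrow> real set) \<Rightarrow> real option \<Rightarrow> nat \<Rightarrow> bool" where
  "no_success_before L x t = (case x of None \<Rightarrow> True
       | Some j \<Rightarrow> j \<notin> searched_before L t)"

definition period_term :: "(real \<Rightarrow> real) \<Rightarrow> real \<Rightarrow> real \<Rightarrow> (nat \<Rightarrow> real set)
    \<Rightarrow> real option \<Rightarrow> nat \<Rightarrow> real" where
  "period_term c v \<delta> L x t = \<delta> ^ t *
     ((if success_at L x t then v else 0) - (if no_success_before L x t then cost c (L t) else 0))"

definition realized_payoff :: "(real \<Rightarrow> real) \<Rightarrow> real \<Rightarrow> real \<Rightarrow> (nat \<Rightarrow> real set)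
    \<Rightarrow> real option \<Rightarrow> real" where
  "realized_payoff c v \<delta> L x = (\<Sum>t. period_term c v \<delta> L x t)"

definition well_defined :: "(real \<Rightarrow> real) \<Rightarrow> real \<Rightarrow> real \<Rightarrow> (nat \<Rightarrow> real set) \<Rightarrow> bool" where
  "well_defined c v \<delta> L \<longleftrightarrow>
     (\<forall>t. set_integrable lebesgue (L t) c) \<and>
     (\<forall>x. summable (period_term c v \<delta> L x)) \<and>
     set_integrable lebesgue {0..<1} (\<lambda>j. realized_payoff c v \<delta> L (Some j))"

definition payoff :: "(real \<Rightarrow> real) \<Rightarrow> real \<Rightarrow> real \<Rightarrow> real \<Rightarrow> (nat \<Rightarrow> real set) \<Rightarrow> real" where
  "payoff c p v \<delta> L = (1 - p) * realized_payoff c v \<delta> L None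
     + p * (LINT j:{0..<1}|lebesgue. realized_payoff c v \<delta> L (Some j))"

end

theory Submission
  imports Defs
begin

text \<open>Search the initial interval [0,e) once, in the first period, and never again. With
  probability p e this finds the innovation, while it costs at most e times the largest cost on
  [0,e). By continuity of c at 0 and c 0 < p v, that largest cost stays below p v for small e,
  so the payoff is positive, whereas never searching yields 0.\<close>

lemma emeasure_lebesgue_subset_unit_interval_finite:
  assumes "S \<in> sets lebesgue" "S \<subseteq> {0..<1::real}"
  shows "emeasure lebesgue S \<noteq> \<infinity>"
proof -
  have "emeasure lebesgue S \<le> emeasure lebesgue {0..<1::real}"
    using assms by (intro emeasure_mono) auto
  then show ?thesis
    by (auto simp: top_unique)
qed

lemma set_integrable_Ico_if_continuous_on:
  fixes c :: "real \<Rightarrow> real"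
  assumes "continuous_on {a..b} c"
  shows "set_integrable lebesgue {a..<b} c"
proof -
  have "set_integrable lebesgue {a..b} c"
    using absolutely_integrable_continuous_real[OF assms] by simp
  then show ?thesis
    by (rule set_integrable_subset) auto
qed

lemma continuous_on_Ico_less_near_left:
  fixes c :: "real \<Rightarrow> real"
  assumes "continuous_on {a..<b} c" "a < b" "c a < y"
  obtains e where "a < e" "e < b" "\<And>x. x \<in> {a..e} \<Longrightarrow> c x < y"
proof -
  have "(c \<longlongrightarrow> c a) (at a within {a..<b})"
    using assms(1,2) by (simp add: continuous_on_def)
  then have "\<forall>\<^sub>F x in at a within {a..<b}. c x < y"
    using assms(3) by (rule order_tendstoD)
  then obtain d where "d > 0"
    and d: "\<And>x. x \<in> {a..<b} \<Longrightarrow> x \<noteq> a \<Longrightarrow> dist x a < d \<Longrightarrow> c x < y"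
    unfolding eventually_at by blast
  define e where "e = min (a + d / 2) ((a + b) / 2)"
  have "a < e" "e < b"
    using \<open>d > 0\<close> assms(2) by (auto simp: e_def min_less_iff_disj)
  moreover have "c x < y" if "x \<in> {a..e}" for x
  proof (cases "x = a")
    case False
    then show ?thesis
      using that \<open>d > 0\<close> \<open>e < b\<close> by (intro d) (auto simp: e_def dist_real_def)
  qed (use assms(3) in simp)
  ultimately show ?thesis
    using that by blast
qed

lemma cost_empty [simp]: "cost c {} = 0"
  by (simp add: cost_def set_lebesgue_integral_def)

lemma cost_le_measure_mult_bound:
  assumes "set_integrable lebesgue S c" "S \<in> sets lebesgue" "emeasure lebesgue S \<noteq> \<infinity>"
    and "\<And>x. x \<in> S \<Longrightarrow> c x \<le> M"
  shows "cost c S \<le> measure lebesgue S * M"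
proof -
  have "cost c S \<le> (LINT x:S|lebesgue. M)"
    unfolding cost_def
  proof (rule set_integral_mono)
    show "set_integrable lebesgue S (\<lambda>_. M)"
      using assms(2,3) by (simp add: set_integrable_def less_top)
  qed (use assms in auto)
  also have "\<dots> = measure lebesgue S * M"
    using assms(2,3) by (simp add: set_integral_const)
  finally show ?thesis .
qed

lemma payoff_never_search: "payoff c p v \<delta> (\<lambda>_. {}) = 0"
proof -
  have "period_term c v \<delta> (\<lambda>_. {}) x = (\<lambda>_. 0)" for x
    by (simp add: fun_eq_iff period_term_def success_at_def split: option.splits)
  then show ?thesis
    by (simp add: payoff_def realized_payoff_def)
qed

definition search_once :: "real set \<Rightarrow> nat \<Rightarrow> real set" where
  "search_once S t = (if t = 0 then S else {})"

lemma period_term_search_once_sums: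
  "period_term c v \<delta> (search_once S) x sums
     ((case x of None \<Rightarrow> 0 | Some j \<Rightarrow> v * indicator S j) - cost c S)"
proof -
  have "period_term c v \<delta> (search_once S) x =
      (\<lambda>t. if t = 0 then (case x of None \<Rightarrow> 0 | Some j \<Rightarrow> v * indicator S j) - cost c S else 0)"
    by (auto simp: fun_eq_iff period_term_def success_at_def no_success_before_def
        searched_before_def search_once_def split: option.splits)
  then show ?thesis
    using sums_single[of 0 "\<lambda>_. (case x of None \<Rightarrow> 0 | Some j \<Rightarrow> v * indicator S j) - cost c S"]
    by simp
qed

lemma realized_payoff_search_once:
  "realized_payoff c v \<delta> (search_once S) None = - cost c S"
  "realized_payoff c v \<delta> (search_once S) (Some j) = v * indicator S j - cost c S"
  using period_term_search_once_sums[of c v \<delta> S None]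
    period_term_search_once_sums[of c v \<delta> S "Some j"]
  by (simp_all add: realized_payoff_def sums_iff)

lemma set_integral_unit_interval_search_once:
  assumes "S \<in> sets lebesgue" "S \<subseteq> {0..<1}"
  shows "set_integrable lebesgue {0..<1} (\<lambda>j. realized_payoff c v \<delta> (search_once S) (Some j))"
    and "(LINT j:{0..<1}|lebesgue. realized_payoff c v \<delta> (search_once S) (Some j))
           = v * measure lebesgue S - cost c S"
proof -
  have fin: "emeasure lebesgue S \<noteq> \<infinity>"
    using assms by (rule emeasure_lebesgue_subset_unit_interval_finite)
  have restrict: "indicator {0..<1} j *\<^sub>R (v * indicator S j) = v * indicator S j" for j :: real
    using assms(2) by (auto simp: indicator_def)
  have success: "set_integrable lebesgue {0..<1} (\<lambda>j. v * indicator S j)"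
    unfolding set_integrable_def restrict using assms(1) fin by (simp add: less_top)
  have cost: "set_integrable lebesgue {0..<1} (\<lambda>_::real. cost c S)"
    by (simp add: set_integrable_def less_top)
  show "set_integrable lebesgue {0..<1} (\<lambda>j. realized_payoff c v \<delta> (search_once S) (Some j))"
    unfolding realized_payoff_search_once by (rule set_integral_diff(1)[OF success cost])
  have "(LINT j:{0..<1}|lebesgue. v * indicator S j) = v * measure lebesgue S"
    unfolding set_lebesgue_integral_def restrict using assms(1) fin by (simp add: less_top)
  then show "(LINT j:{0..<1}|lebesgue. realized_payoff c v \<delta> (search_once S) (Some j))
           = v * measure lebesgue S - cost c S"
    unfolding realized_payoff_search_once set_integral_diff(2)[OF success cost]
    by (simp add: set_integral_const)
qed

lemma payoff_search_once:
  assumes "S \<in> sets lebesgue" "S \<subseteq> {0..<1}"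
  shows "payoff c p v \<delta> (search_once S) = p * v * measure lebesgue S - cost c S"
  unfolding payoff_def set_integral_unit_interval_search_once(2)[OF assms]
    realized_payoff_search_once(1)
  by (simp add: algebra_simps)

lemma payoff_search_once_ge:
  assumes "S \<in> sets lebesgue" "S \<subseteq> {0..<1}" "set_integrable lebesgue S c"
    and "\<And>x. x \<in> S \<Longrightarrow> c x \<le> M"
  shows "payoff c p v \<delta> (search_once S) \<ge> measure lebesgue S * (p * v - M)"
proof -
  have "cost c S \<le> measure lebesgue S * M"
  proof (rule cost_le_measure_mult_bound[OF assms(3,1) _ assms(4)])
    show "emeasure lebesgue S \<noteq> \<infinity>"
      using assms(1,2) by (rule emeasure_lebesgue_subset_unit_interval_finite)
  qed
  then show ?thesis
    by (simp add: payoff_search_once[OF assms(1,2)] algebra_simps)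
qed

lemma well_defined_search_once:
  assumes "S \<in> sets lebesgue" "S \<subseteq> {0..<1}" "set_integrable lebesgue S c"
  shows "well_defined c v \<delta> (search_once S)"
  unfolding well_defined_def
proof (intro conjI allI)
  show "set_integrable lebesgue (search_once S t) c" for t
    using assms(3) by (simp add: search_once_def set_integrable_def)
  show "summable (period_term c v \<delta> (search_once S) x)" for x
    using period_term_search_once_sums by (rule sums_summable)
qed (rule set_integral_unit_interval_search_once(1)[OF assms(1,2)])

lemma admissible_search_once:
  assumes "S \<in> sets lebesgue" "S \<subseteq> {0..<1}"
  shows "admissible (search_once S)"
  using assms by (simp add: admissible_def search_once_def)

theorem lemma1:
  fixes c :: "real \<Rightarrow> real" and p v \<delta> :: real
  assumes "continuous_on {0..<1} c"
    and "strict_mono_on {0..<1} c"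
    and "filterlim c at_top (at_left 1)"
    and "0 < p" and "p < 1" and "0 < v" and "0 < \<delta>" and "\<delta> < 1"
    and "p * v > c 0"
  shows "\<exists>L. admissible L \<and> well_defined c v \<delta> L
           \<and> (\<exists>t. emeasure lebesgue (L t) > 0)
           \<and> payoff c p v \<delta> L > payoff c p v \<delta> (\<lambda>_. {})"
proof -
  define M where "M = (c 0 + p * v) / 2"
  obtain e where "0 < e" "e < 1" and c_less_M: "\<And>x. x \<in> {0..e} \<Longrightarrow> c x < M"
  proof (rule continuous_on_Ico_less_near_left[OF assms(1)])
    show "c 0 < M"
      using assms(9) by (simp add: M_def)
  qed auto
  define S where "S = {0..<e}"
  have S: "S \<in> sets lebesgue" "S \<subseteq> {0..<1}"
    using \<open>e < 1\<close> by (auto simp: S_def)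
  have "continuous_on {0..e} c"
    using assms(1) by (rule continuous_on_subset) (use \<open>e < 1\<close> in auto)
  then have c_integrable: "set_integrable lebesgue S c"
    unfolding S_def by (rule set_integrable_Ico_if_continuous_on)
  have "payoff c p v \<delta> (search_once S) \<ge> measure lebesgue S * (p * v - M)"
    using c_less_M by (intro payoff_search_once_ge[OF S c_integrable]) (auto simp: S_def intro: less_imp_le)
  moreover have "measure lebesgue S * (p * v - M) > 0"
    using \<open>0 < e\<close> assms(9) by (simp add: S_def M_def)
  moreover have "emeasure lebesgue (search_once S 0) > 0"
    using \<open>0 < e\<close> by (simp add: search_once_def S_def)
  ultimately show ?thesis
    using S c_integrable well_defined_search_once admissible_search_once payoff_never_search
    by (metis order.strict_trans2)
qed

end
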